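(* Let $G$ be a locally compact abelian group and let $0\le f\in L^\infty(G)$ be such that $f\ast g\in L^1(G)$ for every $0\le g\in L^1(G)$. Then there exists a representative $f'$ of $f\in L^\infty(G)$ (i.e. $f'=f$ outside a locally null set) with $f'\in L^1(G)$. If moreover $f$ is bounded and continuous, then $f\in L^1(G)$.
   Context: $G$ carries a Haar measure $\lambda$ and is not assumed second countable. A set $A\subset G$ is locally Borel if $A\cap F$ is Borel for every $\sigma$-finite Borel set $F$; it is locally null if moreover $\lambda(A\cap F)=0$ for every such $F$. A function is locally Borel measurable if preimages of Borel sets are locally Borel. $L^\infty(G)$ is the space of locally Borel measurable functions $f$ for which some $\{|f|>c\}$ is locally null, modulo equality outside locally null sets (so that $L^\infty(G)=L^1(G)'$). $f\ast g(x)=\int_G f(y)g(x-y)dy$. *)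

theory Defs
  imports "HOL-Analysis.Analysis"
begin

definition lca_group :: "'a::{topological_ab_group_add, t2_space} itself \<Rightarrow> bool" where
  "lca_group _ \<longleftrightarrow> locally_compact_space (euclidean :: 'a topology)"

definition haar_measure :: "'a::{topological_ab_group_add, t2_space} measure \<Rightarrow> bool" where
  "haar_measure M \<longleftrightarrow>
     sets M = sets borel \<and>
     (\<forall>a A. A \<in> sets M \<longrightarrow> emeasure M ((\<lambda>x. a + x) ` A) = emeasure M A) \<and>
     (\<forall>K. compact K \<longrightarrow> emeasure M K < \<infinity>) \<and>
     (\<forall>A \<in> sets M. emeasure M A = (INF U\<in>{U. open U \<and> A \<subseteq> U}. emeasure M U)) \<and>
     (\<forall>U. open U \<longrightarrow> emeasure M U = (SUP K\<in>{K. compact K \<and> K \<subseteq> U}. emeasure M K)) \<and>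
     emeasure M (space M) \<noteq> 0"

definition sigma_finite_set :: "'a measure \<Rightarrow> 'a set \<Rightarrow> bool" where
  "sigma_finite_set M F \<longleftrightarrow> F \<in> sets M \<and>
     (\<exists>Fn::nat \<Rightarrow> 'a set. range Fn \<subseteq> sets M \<and> (\<forall>n. emeasure M (Fn n) < \<infinity>) \<and> F = (\<Union>n. Fn n))"

definition locally_borel :: "'a measure \<Rightarrow> 'a set \<Rightarrow> bool" where
  "locally_borel M A \<longleftrightarrow> (\<forall>F. sigma_finite_set M F \<longrightarrow> A \<inter> F \<in> sets M)"

definition locally_null :: "'a measure \<Rightarrow> 'a set \<Rightarrow> bool" where
  "locally_null M A \<longleftrightarrow> locally_borel M A \<and>
     (\<forall>F. sigma_finite_set M F \<longrightarrow> emeasure M (A \<inter> F) = 0)"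

definition locally_borel_measurable :: "'a measure \<Rightarrow> ('a \<Rightarrow> real) \<Rightarrow> bool" where
  "locally_borel_measurable M f \<longleftrightarrow> (\<forall>B \<in> sets (borel :: real measure). locally_borel M (f -` B))"

text \<open>f is a representative of an element of L-infinity(G)\<close>
definition Linfty :: "'a measure \<Rightarrow> ('a \<Rightarrow> real) \<Rightarrow> bool" where
  "Linfty M f \<longleftrightarrow> locally_borel_measurable M f \<and> (\<exists>c. locally_null M {x. \<bar>f x\<bar> > c})"

definition conv :: "'a::ab_group_add measure \<Rightarrow> ('a \<Rightarrow> real) \<Rightarrow> ('a \<Rightarrow> real) \<Rightarrow> 'a \<Rightarrow> real" where
  "conv M f g x = (\<integral>y. f y * g (x - y) \<partial>M)"

end

(*
  Fix a compact neighbourhood K of 0 and an open neighbourhood U of 0 with U - U + U \<subseteq> K.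
  The convolution c = f * 1_K is integrable by hypothesis, and on p + U it dominates the integral
  of f over p + (U - U). Take (Zorn) a maximal family of pairwise disjoint translates p + U; by
  maximality the sets p + (U - U) cover G, so every compact set is covered by finitely many of them
  and the integral of f over any compact set is at most (integral of c) / \<lambda>(U).
  Exhausting this bounded supremum by an increasing sequence of compact sets L_n yields a
  sigma-finite set S = \<Union>n L_n with f 1_S integrable, while f vanishes almost everywhere on every
  compact set disjoint from S. Inner regularity turns the latter into local nullity of
  {f 1_S \<noteq> f}. If f is continuous, {f \<noteq> 0} is the union of the open sets {|f| > 1/n}, which
  have finite measure because f = f 1_S almost everywhere on compact sets; so f = f 1_S a.e.
*)

theory Submission
  imports Defs
begin

lemma open_translation_group_add:
  fixes S :: "'a::topological_group_add set"
  assumes "open S"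
  shows "open ((+) a ` S)"
proof -
  have "(+) a ` S = (\<lambda>x. - a + x) -` S"
    by (force simp: algebra_simps)
  then show ?thesis
    using assms by (auto intro!: open_vimage continuous_intros)
qed

lemma compact_translation_group_add:
  fixes S :: "'a::topological_group_add set"
  shows "compact S \<Longrightarrow> compact ((+) a ` S)"
  by (rule compact_continuous_image) (intro continuous_intros)

lemma open_differences_group_add:
  fixes U :: "'a::topological_ab_group_add set"
  assumes "open U"
  shows "open {u - v |u v. u \<in> U \<and> v \<in> U}"
proof -
  have "open ((\<lambda>u. u - v) ` U)" for v
    using open_translation_group_add[OF assms, of "- v"] by simp
  moreover have "{u - v |u v. u \<in> U \<and> v \<in> U} = (\<Union>v\<in>U. (\<lambda>u. u - v) ` U)"
    by auto
  ultimately show ?thesis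
    by (simp add: open_UN)
qed

lemma compact_translated_reflection:
  fixes K :: "'a::topological_ab_group_add set"
  assumes "compact K"
  shows "compact {y. x - y \<in> K}"
proof -
  have "{y. x - y \<in> K} = (\<lambda>k. x - k) ` K"
    by (auto simp: image_iff intro!: bexI[of _ "x - _"])
  then show ?thesis
    using assms by (auto intro!: compact_continuous_image continuous_intros)
qed

lemma nhds_zero_diff_add:
  fixes W :: "'a::topological_group_add set"
  assumes "open W" "0 \<in> W"
  obtains U where "open U" "0 \<in> U" "\<And>a b c. a \<in> U \<Longrightarrow> b \<in> U \<Longrightarrow> c \<in> U \<Longrightarrow> a - b + c \<in> W"
proof -
  let ?\<phi> = "\<lambda>(a, b, c). a - b + c :: 'a"
  have "continuous_on UNIV ?\<phi>"
    by (simp add: case_prod_unfold continuous_intros)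
  then have "open (?\<phi> -` W)" "(0, 0, 0) \<in> ?\<phi> -` W"
    using assms by (auto simp: continuous_on_open_vimage)
  then obtain A BC where A: "open A" "(0, 0, 0) \<in> A \<times> BC" "A \<times> BC \<subseteq> ?\<phi> -` W"
    and "open BC" by (rule open_prod_elim)
  then obtain B C where BC: "open B" "open C" "(0, 0) \<in> B \<times> C" "B \<times> C \<subseteq> BC"
    by (metis mem_Sigma_iff open_prod_elim)
  show ?thesis
  proof (rule that[of "A \<inter> B \<inter> C"])
    fix a b c assume "a \<in> A \<inter> B \<inter> C" "b \<in> A \<inter> B \<inter> C" "c \<in> A \<inter> B \<inter> C"
    then have "(a, b, c) \<in> A \<times> BC"
      using BC(4) by auto
    then show "a - b + c \<in> W"
      using A(3) by auto
  qed (use A BC in auto)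
qed

lemma lca_group_nhds_diff_add_compact:
  assumes "lca_group TYPE('a)"
  obtains U K :: "'a::{topological_ab_group_add, t2_space} set" where "open U" "0 \<in> U" "compact K"
    "\<And>a b c. a \<in> U \<Longrightarrow> b \<in> U \<Longrightarrow> c \<in> U \<Longrightarrow> a - b + c \<in> K"
proof -
  have "\<exists>V K :: 'a set. open V \<and> compact K \<and> 0 \<in> V \<and> V \<subseteq> K"
    using assms unfolding lca_group_def locally_compact_space_def by auto
  then obtain V K :: "'a set" where V: "open V" "0 \<in> V" "V \<subseteq> K" and "compact K"
    by blast
  obtain U where "open U" "0 \<in> U" and U: "\<And>a b c. a \<in> U \<Longrightarrow> b \<in> U \<Longrightarrow> c \<in> U \<Longrightarrow> a - b + c \<in> V"
    using nhds_zero_diff_add[OF V(1,2)] by blast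
  show ?thesis
    by (rule that[OF \<open>open U\<close> \<open>0 \<in> U\<close> \<open>compact K\<close>]) (use U V(3) in blast)
qed

lemma maximal_disjoint_translates:
  fixes U :: "'a::ab_group_add set"
  assumes "U \<noteq> {}"
  obtains X where "disjoint_family_on (\<lambda>p. (+) p ` U) X"
    and "\<And>y. \<exists>p\<in>X. \<exists>u\<in>U. \<exists>v\<in>U. y = p + (u - v)"
proof -
  define T where "T p = (+) p ` U" for p
  define \<F> where "\<F> = {X. disjoint_family_on T X}"
  have "\<Union>C \<in> \<F>" if "C \<in> chains \<F>" for C
    using that unfolding \<F>_def chains_def chain_subset_def disjoint_family_on_def
    by (smt (verit) UnionE mem_Collect_eq subset_iff)
  then obtain X where X: "X \<in> \<F>" and max: "\<And>Y. Y \<in> \<F> \<Longrightarrow> X \<subseteq> Y \<Longrightarrow> Y = X"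
    using Zorn_Lemma[of \<F>] by blast
  have "\<exists>p\<in>X. \<exists>u\<in>U. \<exists>v\<in>U. y = p + (u - v)" for y
  proof (rule ccontr)
    assume uncovered: "\<not> ?thesis"
    then have "T y \<inter> T p = {}" if "p \<in> X" for p
      using that by (fastforce simp: T_def algebra_simps)
    moreover have "y \<notin> X"
      using uncovered assms by force
    ultimately have "insert y X \<in> \<F>"
      using X by (auto simp: \<F>_def disjoint_family_on_insert Int_commute)
    then show False
      using max \<open>y \<notin> X\<close> by blast
  qed
  then show ?thesis
    using X that unfolding \<F>_def T_def by blast
qed

lemma exists_compact_incseq_tendsto_Sup:
  fixes \<nu> :: "'a::topological_space set \<Rightarrow> real"
  assumes mono: "\<And>K L. compact L \<Longrightarrow> K \<subseteq> L \<Longrightarrow> compact K \<Longrightarrow> \<nu> K \<le> \<nu> L"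
    and bdd: "bdd_above (\<nu> ` {K. compact K})"
  obtains L where "\<And>n. compact (L n)" "incseq L" "(\<lambda>n. \<nu> (L n)) \<longlonglongrightarrow> Sup (\<nu> ` {K. compact K})"
proof -
  define s where "s = Sup (\<nu> ` {K. compact K})"
  have "\<exists>K. compact K \<and> s - inverse (Suc n) < \<nu> K" for n
  proof -
    have "s - inverse (Suc n) < Sup (\<nu> ` {K. compact K})"
      by (simp add: s_def)
    moreover have "\<nu> ` {K. compact K} \<noteq> {}"
      using compact_empty by blast
    ultimately obtain v where "v \<in> \<nu> ` {K. compact K}" "s - inverse (Suc n) < v"
      by (rule less_cSupE)
    then show ?thesis
      by blast
  qed
  then obtain K where K: "\<And>n. compact (K n)" "\<And>n. s - inverse (Suc n) < \<nu> (K n)"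
    by metis
  define L where "L n = (\<Union>m\<le>n. K m)" for n
  have L_compact: "compact (L n)" for n
    unfolding L_def using K(1) by (intro compact_UN) auto
  have "incseq L"
    unfolding L_def by (intro monoI UN_mono) auto
  have "K n \<subseteq> L n" for n
    unfolding L_def by blast
  then have "\<forall>\<^sub>F n in sequentially. s - inverse (Suc n) \<le> \<nu> (L n)"
    using K(2) mono[OF L_compact _ K(1)] by (intro always_eventually allI) (meson less_le_trans less_imp_le)
  moreover have "\<forall>\<^sub>F n in sequentially. \<nu> (L n) \<le> s"
    unfolding s_def using bdd L_compact by (intro always_eventually allI cSup_upper) auto
  moreover have "(\<lambda>n. s - inverse (Suc n)) \<longlonglongrightarrow> s"
    using tendsto_diff[OF tendsto_const LIMSEQ_inverse_real_of_nat, of s] by simp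
  ultimately have "(\<lambda>n. \<nu> (L n)) \<longlonglongrightarrow> s"
    using tendsto_const by (rule tendsto_sandwich)
  with L_compact \<open>incseq L\<close> show ?thesis
    unfolding s_def by (rule that)
qed

lemma set_integral_mono_set_AE:
  fixes f :: "'a \<Rightarrow> real"
  assumes "set_integrable M B f" "A \<in> sets M" "A \<subseteq> B" "AE x\<in>B in M. 0 \<le> f x"
  shows "(LINT x:A|M. f x) \<le> (LINT x:B|M. f x)"
  unfolding set_lebesgue_integral_def
proof (rule integral_mono_AE)
  show "integrable M (\<lambda>x. indicator A x *\<^sub>R f x)" "integrable M (\<lambda>x. indicator B x *\<^sub>R f x)"
    using set_integrable_subset[OF assms(1-3)] assms(1) by (simp_all add: set_integrable_def)
  show "AE x in M. indicator A x *\<^sub>R f x \<le> indicator B x *\<^sub>R f x"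
    using assms(4) by eventually_elim (use assms(3) in \<open>auto split: split_indicator\<close>)
qed

lemma set_integral_le_sum_cover:
  fixes f :: "'a \<Rightarrow> real"
  assumes "finite J" "\<And>i. i \<in> J \<Longrightarrow> set_integrable M (A i) f"
    and "\<And>i. i \<in> J \<Longrightarrow> AE x\<in>A i in M. 0 \<le> f x"
    and "set_integrable M L f" "L \<subseteq> (\<Union>i\<in>J. A i)"
  shows "(LINT x:L|M. f x) \<le> (\<Sum>i\<in>J. LINT x:A i|M. f x)"
proof -
  have "AE x in M. \<forall>i\<in>J. x \<in> A i \<longrightarrow> 0 \<le> f x"
    by (rule AE_finite_allI[OF assms(1) assms(3)])
  then have "AE x in M. indicator L x *\<^sub>R f x \<le> (\<Sum>i\<in>J. indicator (A i) x *\<^sub>R f x)"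
  proof eventually_elim
    case (elim x)
    then have terms_nonneg: "\<And>i. i \<in> J \<Longrightarrow> 0 \<le> indicator (A i) x *\<^sub>R f x"
      by (auto split: split_indicator)
    show ?case
    proof (cases "x \<in> L")
      case True
      then obtain i where "i \<in> J" "x \<in> A i"
        using assms(5) by auto
      then have "indicator L x *\<^sub>R f x = indicator (A i) x *\<^sub>R f x"
        using True by simp
      also have "\<dots> \<le> (\<Sum>i\<in>J. indicator (A i) x *\<^sub>R f x)"
        using \<open>i \<in> J\<close> terms_nonneg assms(1) by (intro member_le_sum) auto
      finally show ?thesis .
    qed (use sum_nonneg[OF terms_nonneg] in simp)
  qed
  then have "(LINT x:L|M. f x) \<le> (LINT x|M. (\<Sum>i\<in>J. indicator (A i) x *\<^sub>R f x))"
    unfolding set_lebesgue_integral_def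
    using assms(2,4) by (intro integral_mono_AE) (auto simp: set_integrable_def)
  also have "\<dots> = (\<Sum>i\<in>J. LINT x:A i|M. f x)"
    unfolding set_lebesgue_integral_def
    using assms(2) unfolding set_integrable_def by (rule Bochner_Integration.integral_sum)
  finally show ?thesis .
qed

lemma set_integral_le_integral:
  fixes c :: "'a \<Rightarrow> real"
  assumes "integrable M c" "\<And>x. 0 \<le> c x" "A \<in> sets M"
  shows "(LINT x:A|M. c x) \<le> integral\<^sup>L M c"
  unfolding set_lebesgue_integral_def
  using assms by (intro integral_mono integrable_mult_indicator) (auto split: split_indicator)

lemma sum_set_integral_disjoint_le:
  fixes c :: "'a \<Rightarrow> real"
  assumes c: "integrable M c" "\<And>x. 0 \<le> c x"
    and T: "finite J" "disjoint_family_on T J" "\<And>i. i \<in> J \<Longrightarrow> T i \<in> sets M"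
  shows "(\<Sum>i\<in>J. LINT x:T i|M. c x) \<le> integral\<^sup>L M c"
proof -
  have "(\<Sum>i\<in>J. LINT x:T i|M. c x) = (LINT x:(\<Union>i\<in>J. T i)|M. c x)"
    using T c(1) integrable_mult_indicator set_integrable_def
    by (intro set_integral_finite_Union[symmetric]) blast+
  also have "\<dots> \<le> integral\<^sup>L M c"
    using c T by (intro set_integral_le_integral sets.finite_UN)
  finally show ?thesis .
qed

lemma conv_indicator: "conv M f (indicator K) x = (LINT y:{y. x - y \<in> K}|M. f y)"
  by (simp add: conv_def set_lebesgue_integral_def indicator_def mult.commute)

section \<open>Locally null sets\<close>

lemma sigma_finite_setI_finite:
  "B \<in> sets M \<Longrightarrow> emeasure M B < \<infinity> \<Longrightarrow> sigma_finite_set M B"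
  unfolding sigma_finite_set_def by (intro conjI exI[of _ "\<lambda>_. B"]) auto

lemma sigma_finite_set_UN:
  fixes B :: "nat \<Rightarrow> 'a set"
  assumes "\<And>n. B n \<in> sets M" "\<And>n. emeasure M (B n) < \<infinity>"
  shows "sigma_finite_set M (\<Union>n. B n)"
proof -
  have "range B \<subseteq> sets M"
    using assms(1) by auto
  then show ?thesis
    unfolding sigma_finite_set_def using assms(2) by (intro conjI exI[of _ B]) auto
qed

lemma locally_borel_Diff:
  "locally_borel M A \<Longrightarrow> B \<in> sets M \<Longrightarrow> locally_borel M (A - B)"
  unfolding locally_borel_def sigma_finite_set_def by (auto simp: Diff_Int_distrib2)

lemma locally_null_AE:
  assumes "locally_null M N" "sigma_finite_set M F"
  shows "AE x\<in>F in M. x \<notin> N"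
proof -
  have "N \<inter> F \<in> null_sets M"
    using assms unfolding locally_null_def locally_borel_def by auto
  then show ?thesis
    by (rule AE_I') auto
qed

lemma locally_nonneg_AE:
  "locally_null M {x. f x < (0::real)} \<Longrightarrow> sigma_finite_set M F \<Longrightarrow> AE x\<in>F in M. 0 \<le> f x"
  by (drule (1) locally_null_AE) auto

lemma locally_borel_measurable_set_borel_measurable:
  assumes f: "locally_borel_measurable M f" and F: "sigma_finite_set M F"
  shows "set_borel_measurable M F f"
  unfolding set_borel_measurable_def
proof (rule measurableI)
  fix A :: "real set" assume "A \<in> sets borel"
  then have fA: "f -` A \<inter> F \<in> sets M"
    using assms unfolding locally_borel_measurable_def locally_borel_def by blast
  have "F \<in> sets M"
    using F by (simp add: sigma_finite_set_def)
  moreover have "(\<lambda>x. indicator F x *\<^sub>R f x) -` A \<inter> space M =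
      (if 0 \<in> A then (f -` A \<inter> F) \<union> (space M - F) else f -` A \<inter> F)"
    using sets.sets_into_space[OF \<open>F \<in> sets M\<close>]
    by (auto simp: indicator_def of_bool_def split: if_splits)
  ultimately show "(\<lambda>x. indicator F x *\<^sub>R f x) -` A \<inter> space M \<in> sets M"
    using fA by auto
qed auto

lemma Linfty_set_integrable:
  assumes f: "Linfty M f" and B: "B \<in> sets M" "emeasure M B < \<infinity>"
  shows "set_integrable M B f"
proof -
  have F: "sigma_finite_set M B"
    using B by (rule sigma_finite_setI_finite)
  obtain c where c: "locally_null M {x. \<bar>f x\<bar> > c}"
    using f by (auto simp: Linfty_def)
  have "set_integrable M B (\<lambda>_. c)"
    using B by (simp add: set_integrable_def integrable_real_indicator)
  moreover have "set_borel_measurable M B f"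
    using f F by (simp add: Linfty_def locally_borel_measurable_set_borel_measurable)
  moreover from locally_null_AE[OF c F] have "AE x\<in>B in M. norm (f x) \<le> norm c"
    by eventually_elim auto
  ultimately show ?thesis
    by (rule set_integrable_bound)
qed

section \<open>Haar measures\<close>

locale haar =
  fixes M :: "'a::{topological_ab_group_add, t2_space} measure"
  assumes haar_measure: "haar_measure M"
begin

lemma sets_eq_borel: "sets M = sets borel"
  and emeasure_translation: "A \<in> sets M \<Longrightarrow> emeasure M ((+) a ` A) = emeasure M A"
  and emeasure_compact_finite: "compact K \<Longrightarrow> emeasure M K < \<infinity>"
  and outer_regular: "A \<in> sets M \<Longrightarrow> emeasure M A = (INF U\<in>{U. open U \<and> A \<subseteq> U}. emeasure M U)"
  and inner_regular_open:
    "open U \<Longrightarrow> emeasure M U = (SUP K\<in>{K. compact K \<and> K \<subseteq> U}. emeasure M K)"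
  and emeasure_space_nonzero: "emeasure M (space M) \<noteq> 0"
  using haar_measure unfolding haar_measure_def by auto

lemma space_eq_UNIV: "space M = UNIV"
  using sets_eq_imp_space_eq[OF sets_eq_borel] by simp

lemma open_measurable: "open U \<Longrightarrow> U \<in> sets M"
  by (simp add: sets_eq_borel borel_open)

lemma compact_measurable: "compact K \<Longrightarrow> K \<in> sets M"
  by (simp add: sets_eq_borel borel_closed compact_imp_closed)

lemma emeasure_open_le_if_compact_le:
  assumes "open U" "\<And>K. compact K \<Longrightarrow> K \<subseteq> U \<Longrightarrow> emeasure M K \<le> C"
  shows "emeasure M U \<le> C"
  unfolding inner_regular_open[OF assms(1)] by (rule SUP_least) (use assms(2) in blast)

lemma emeasure_open_pos:
  assumes "open U" "U \<noteq> {}"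
  shows "0 < emeasure M U"
proof (rule ccontr)
  assume "\<not> 0 < emeasure M U"
  then have translates_null: "emeasure M ((+) a ` U) = 0" for a
    using emeasure_translation[OF open_measurable[OF \<open>open U\<close>]] by simp
  obtain u where "u \<in> U"
    using assms(2) by blast
  have compact_null: "emeasure M K = 0" if "compact K" for K
  proof -
    have cover: "K \<subseteq> (\<Union>k\<in>K. (+) (k - u) ` U)"
    proof
      fix k assume "k \<in> K"
      have "k \<in> (+) (k - u) ` U"
        using \<open>u \<in> U\<close> by (rule rev_image_eqI) simp
      then show "k \<in> (\<Union>k\<in>K. (+) (k - u) ` U)"
        using \<open>k \<in> K\<close> by blast
    qed
    obtain F where F: "F \<subseteq> K" "finite F" "K \<subseteq> (\<Union>k\<in>F. (+) (k - u) ` U)"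
      by (rule compactE_image[OF \<open>compact K\<close> _ cover]) (rule open_translation_group_add[OF assms(1)])
    have translates_sets: "(+) a ` U \<in> sets M" for a
      using assms(1) by (intro open_measurable open_translation_group_add)
    have "emeasure M K \<le> emeasure M (\<Union>k\<in>F. (+) (k - u) ` U)"
      using F translates_sets by (intro emeasure_mono sets.finite_UN) auto
    also have "\<dots> \<le> (\<Sum>k\<in>F. emeasure M ((+) (k - u) ` U))"
      using F translates_sets by (intro emeasure_subadditive_finite) auto
    finally show ?thesis
      by (simp add: translates_null)
  qed
  have "emeasure M UNIV \<le> 0"
    by (rule emeasure_open_le_if_compact_le) (simp_all add: compact_null)
  then show False
    using emeasure_space_nonzero space_eq_UNIV by simp
qed

lemma outer_regular_finite:
  assumes B: "B \<in> sets M" "emeasure M B < \<infinity>" and "e > 0"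
  obtains W where "open W" "B \<subseteq> W" "emeasure M W < \<infinity>" "measure M W < measure M B + e"
proof -
  have "emeasure M B < emeasure M B + ennreal e"
    using B(2) \<open>e > 0\<close> by (simp add: ennreal_add_less_top less_top)
  then obtain W where W: "open W" "B \<subseteq> W" "emeasure M W < emeasure M B + ennreal e"
    unfolding outer_regular[OF B(1)] INF_less_iff by auto
  have "emeasure M B + ennreal e < \<infinity>"
    using B(2) by (simp add: ennreal_add_less_top)
  with W(3) have W_finite: "emeasure M W < \<infinity>"
    by (rule order.strict_trans)
  have "ennreal (measure M W) < ennreal (measure M B + e)"
    using W(3) W_finite B(2) \<open>e > 0\<close> by (simp add: emeasure_eq_ennreal_measure less_top)
  then have "measure M W < measure M B + e"
    by (rule ennreal_less_iff[THEN iffD1, rotated]) simp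
  with W W_finite show ?thesis
    by (intro that)
qed

lemma inner_regular_open_finite:
  assumes W: "open W" "emeasure M W < \<infinity>" and "e > 0"
  obtains K where "compact K" "K \<subseteq> W" "measure M W < measure M K + e"
proof (cases "measure M W < e")
  case False
  then have "ennreal (measure M W - e) < emeasure M W"
    using W(2) \<open>e > 0\<close> by (simp add: emeasure_eq_ennreal_measure less_top ennreal_less_iff)
  then obtain K where K: "compact K" "K \<subseteq> W" "ennreal (measure M W - e) < emeasure M K"
    unfolding inner_regular_open[OF W(1)] less_SUP_iff by auto
  then have "ennreal (measure M W - e) < ennreal (measure M K)"
    using emeasure_compact_finite[OF K(1)] by (simp add: emeasure_eq_ennreal_measure less_top)
  then have "measure M W - e < measure M K"
    by (rule ennreal_less_iff[THEN iffD1, rotated]) (use False in simp)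
  then have "measure M W < measure M K + e"
    by simp
  with K(1,2) show ?thesis
    by (rule that)
next
  case True
  then show ?thesis
    by (intro that[of "{}"]) auto
qed

(* The definition of a Haar measure only asks for inner regularity on open sets. *)
lemma inner_regular_finite:
  assumes B: "B \<in> sets M" "emeasure M B < \<infinity>" and "e > 0"
  obtains K where "compact K" "K \<subseteq> B" "measure M B < measure M K + e"
proof -
  have e3: "e / 3 > 0"
    using \<open>e > 0\<close> by simp
  obtain W where W: "open W" "B \<subseteq> W" "emeasure M W < \<infinity>" "measure M W < measure M B + e / 3"
    using outer_regular_finite[OF B e3] .
  have W_sets: "W \<in> sets M"
    using W(1) by (rule open_measurable)
  have "W - B \<in> sets M" "emeasure M (W - B) < \<infinity>"
    using W_sets B W(3) emeasure_mono[of "W - B" W M] by auto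
  from outer_regular_finite[OF this e3]
  obtain V where V: "open V" "W - B \<subseteq> V" "emeasure M V < \<infinity>"
      "measure M V < measure M (W - B) + e / 3" .
  obtain K where K: "compact K" "K \<subseteq> W" "measure M W < measure M K + e / 3"
    using inner_regular_open_finite[OF W(1,3) e3] .
  have "measure M (W - B) = measure M W - measure M B"
    using W W_sets B by (intro measure_Diff) auto
  moreover have "measure M K \<le> measure M (K - V) + measure M V"
  proof -
    have "K - V \<in> fmeasurable M"
      using compact_diff[OF K(1) V(1)] by (intro fmeasurableI compact_measurable emeasure_compact_finite)
    moreover have "V \<in> fmeasurable M"
      using V(1,3) by (intro fmeasurableI open_measurable)
    ultimately have "measure M K \<le> measure M ((K - V) \<union> V)"
      using K(1) by (intro measure_mono_fmeasurable fmeasurable.Un compact_measurable) auto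
    also have "\<dots> \<le> measure M (K - V) + measure M V"
      using \<open>K - V \<in> fmeasurable M\<close> \<open>V \<in> fmeasurable M\<close> by (intro measure_Un_le) auto
    finally show ?thesis .
  qed
  moreover have "measure M B \<le> measure M W"
    using W W_sets B by (intro measure_mono_fmeasurable) (auto intro: fmeasurableI)
  ultimately have "measure M B < measure M (K - V) + e"
    using W(4) V(4) K(3) by linarith
  moreover have "compact (K - V)"
    using K(1) V(1) by (rule compact_diff)
  moreover have "K - V \<subseteq> B"
    using K(2) V(2) by blast
  ultimately show ?thesis
    using that by blast
qed

lemma emeasure_eq_0_if_compact_subsets_null:
  assumes B: "B \<in> sets M" "emeasure M B < \<infinity>"
    and null: "\<And>K. compact K \<Longrightarrow> K \<subseteq> B \<Longrightarrow> emeasure M K = 0"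
  shows "emeasure M B = 0"
proof -
  have "measure M B \<le> 0 + e" if "e > 0" for e
  proof -
    obtain K where "compact K" "K \<subseteq> B" "measure M B < measure M K + e"
      using inner_regular_finite[OF B \<open>e > 0\<close>] .
    then show ?thesis
      using null by (simp add: measure_def)
  qed
  then have "measure M B = 0"
    using measure_nonneg[of M B] field_le_epsilon by (metis add_0 order_antisym)
  then show ?thesis
    using B(2) by (simp add: emeasure_eq_ennreal_measure less_top)
qed

lemma locally_null_if_compact_subsets_null:
  assumes A: "locally_borel M A" and null: "\<And>K. compact K \<Longrightarrow> K \<subseteq> A \<Longrightarrow> emeasure M K = 0"
  shows "locally_null M A"
  unfolding locally_null_def
proof (intro conjI allI impI A)
  fix F assume "sigma_finite_set M F"
  then obtain F' :: "nat \<Rightarrow> 'a set"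
    where F': "range F' \<subseteq> sets M" "\<And>n. emeasure M (F' n) < \<infinity>" "F = (\<Union>n. F' n)"
    unfolding sigma_finite_set_def by blast
  have "A \<inter> F' n \<in> sets M" for n
    using A F' by (simp add: locally_borel_def sigma_finite_setI_finite)
  moreover have "emeasure M (A \<inter> F' n) = 0" for n
  proof (rule emeasure_eq_0_if_compact_subsets_null)
    show "emeasure M (A \<inter> F' n) < \<infinity>"
      using F' \<open>A \<inter> F' n \<in> sets M\<close> emeasure_mono[of "A \<inter> F' n" "F' n" M]
      by (auto simp: subset_eq intro: le_less_trans)
  qed (use null \<open>A \<inter> F' n \<in> sets M\<close> in auto)
  ultimately show "emeasure M (A \<inter> F) = 0"
    unfolding F'(3) Int_UN_distrib by (intro emeasure_UN_eq_0) auto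
qed

lemma measure_translation: "A \<in> sets M \<Longrightarrow> measure M ((+) a ` A) = measure M A"
  by (simp add: measure_def emeasure_translation)

lemma measure_mult_sum_le_integral:
  fixes c :: "'a \<Rightarrow> real"
  assumes c: "integrable M c" "\<And>x. 0 \<le> c x"
    and U: "open U" "emeasure M U < \<infinity>" and X: "disjoint_family_on (\<lambda>p. (+) p ` U) X"
    and dominated: "\<And>p x. p \<in> X \<Longrightarrow> x \<in> (+) p ` U \<Longrightarrow> a p \<le> c x"
    and J: "finite J" "J \<subseteq> X"
  shows "measure M U * (\<Sum>p\<in>J. a p) \<le> integral\<^sup>L M c"
proof -
  have T_sets: "(+) p ` U \<in> sets M" for p
    using U(1) by (intro open_measurable open_translation_group_add)
  have T_finite: "emeasure M ((+) p ` U) < \<infinity>" for p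
    using U emeasure_translation[OF open_measurable] by simp
  have "measure M U * (\<Sum>p\<in>J. a p) = (\<Sum>p\<in>J. LINT x:(+) p ` U|M. a p)"
    using T_sets T_finite U(1) by (simp add: sum_distrib_left set_integral_const measure_translation
        open_measurable less_top)
  also have "\<dots> \<le> (\<Sum>p\<in>J. LINT x:(+) p ` U|M. c x)"
  proof (intro sum_mono set_integral_mono)
    fix p assume "p \<in> J"
    then show "a p \<le> c x" if "x \<in> (+) p ` U" for x
      using dominated J(2) that by blast
    show "set_integrable M ((+) p ` U) (\<lambda>_. a p)"
      using T_sets T_finite by (simp add: set_integrable_def integrable_real_indicator)
    show "set_integrable M ((+) p ` U) c"
      unfolding set_integrable_def using T_sets c(1) by (rule integrable_mult_indicator)
  qed
  also have "\<dots> \<le> integral\<^sup>L M c"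
    using c J(1) disjoint_family_on_mono[OF J(2) X] T_sets by (rule sum_set_integral_disjoint_le)
  finally show ?thesis .
qed

lemma locally_null_outside_support:
  assumes f: "locally_borel_measurable M f" and S: "S \<in> sets M"
    and null: "\<And>K. compact K \<Longrightarrow> K \<inter> S = {} \<Longrightarrow> AE x\<in>K in M. f x = 0"
  shows "locally_null M {x. indicator S x *\<^sub>R f x \<noteq> f x}"
proof (rule locally_null_if_compact_subsets_null)
  have eq: "{x. indicator S x *\<^sub>R f x \<noteq> f x} = f -` (- {0}) - S"
    by (auto split: split_indicator)
  have "locally_borel M (f -` (- {0}))"
    using f unfolding locally_borel_measurable_def by (simp add: borel_open)
  then show "locally_borel M {x. indicator S x *\<^sub>R f x \<noteq> f x}"
    unfolding eq using S by (rule locally_borel_Diff)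
  fix K assume K: "compact K" "K \<subseteq> {x. indicator S x *\<^sub>R f x \<noteq> f x}"
  then have K_null: "AE x\<in>K in M. f x = 0" and nonzero: "\<And>x. x \<in> K \<Longrightarrow> f x \<noteq> 0"
    unfolding eq by (auto intro: null)
  from K_null have "AE x in M. x \<notin> K"
    by eventually_elim (use nonzero in blast)
  then show "emeasure M K = 0"
    using AE_iff_null_sets[OF compact_measurable[OF K(1)]] by auto
qed

lemma emeasure_abs_greater_finite:
  fixes f g :: "'a \<Rightarrow> real"
  assumes f: "continuous_on UNIV f" and g: "integrable M g"
    and eq: "locally_null M {x. g x \<noteq> f x}" and "e > 0"
  shows "emeasure M {x. e < \<bar>f x\<bar>} < \<infinity>"
proof -
  have "emeasure M {x. e < \<bar>f x\<bar>} \<le> ennreal ((\<integral>x. \<bar>g x\<bar> \<partial>M) / e)"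
  proof (rule emeasure_open_le_if_compact_le)
    show "open {x. e < \<bar>f x\<bar>}"
      using f by (intro open_Collect_less continuous_intros)
    fix K assume K: "compact K" "K \<subseteq> {x. e < \<bar>f x\<bar>}"
    have K_sets: "K \<in> sets M" and K_finite: "emeasure M K < \<infinity>"
      using K(1) by (rule compact_measurable, rule emeasure_compact_finite)
    have "AE x\<in>K in M. x \<notin> {x. g x \<noteq> f x}"
      using eq K_sets K_finite by (intro locally_null_AE sigma_finite_setI_finite)
    then have "AE x\<in>K in M. e \<le> \<bar>g x\<bar>"
      by eventually_elim (use K(2) in auto)
    moreover have "set_integrable M K (\<lambda>_. e)"
      using K_sets K_finite by (simp add: set_integrable_def integrable_real_indicator)
    moreover have "set_integrable M K (\<lambda>x. \<bar>g x\<bar>)"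
      unfolding set_integrable_def using K_sets g by (intro integrable_mult_indicator integrable_abs)
    ultimately have "(LINT x:K|M. e) \<le> (LINT x:K|M. \<bar>g x\<bar>)"
      by (intro set_integral_mono_AE)
    also have "\<dots> \<le> (\<integral>x. \<bar>g x\<bar> \<partial>M)"
      using g K_sets by (intro set_integral_le_integral) auto
    finally have "measure M K * e \<le> (\<integral>x. \<bar>g x\<bar> \<partial>M)"
      using K_sets K_finite by (simp add: set_integral_const less_top)
    then have "measure M K \<le> (\<integral>x. \<bar>g x\<bar> \<partial>M) / e"
      using \<open>e > 0\<close> by (simp add: pos_le_divide_eq)
    then show "emeasure M K \<le> ennreal ((\<integral>x. \<bar>g x\<bar> \<partial>M) / e)"
      using K_finite by (simp add: emeasure_eq_ennreal_measure less_top ennreal_leI)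
  qed
  also have "\<dots> < \<infinity>"
    by simp
  finally show ?thesis .
qed

lemma integrable_if_continuous_locally_eq:
  fixes f g :: "'a \<Rightarrow> real"
  assumes f: "continuous_on UNIV f" and g: "integrable M g" and eq: "locally_null M {x. g x \<noteq> f x}"
  shows "integrable M f"
proof -
  define Z where "Z = {x. f x \<noteq> 0}"
  have "f x \<noteq> 0 \<longleftrightarrow> (\<exists>n. inverse (Suc n) < \<bar>f x\<bar>)" for x
    using reals_Archimedean[of "\<bar>f x\<bar>"] by auto
  then have Z_eq: "Z = (\<Union>n. {x. inverse (Suc n) < \<bar>f x\<bar>})"
    unfolding Z_def by blast
  have "open {x. inverse (Suc n) < \<bar>f x\<bar>}" for n
    using f by (intro open_Collect_less continuous_intros)
  moreover have "emeasure M {x. inverse (Suc n) < \<bar>f x\<bar>} < \<infinity>" for n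
    using f g eq by (rule emeasure_abs_greater_finite) simp
  ultimately have "sigma_finite_set M Z"
    unfolding Z_eq by (intro sigma_finite_set_UN open_measurable)
  then have "AE x\<in>Z in M. x \<notin> {x. g x \<noteq> f x}"
    by (rule locally_null_AE[OF eq])
  then have ae_eq: "AE x in M. indicator Z x *\<^sub>R g x = f x"
    by eventually_elim (auto simp: Z_def split: split_indicator)
  have int: "integrable M (\<lambda>x. indicator Z x *\<^sub>R g x)"
    using \<open>sigma_finite_set M Z\<close> g by (intro integrable_mult_indicator) (simp add: sigma_finite_set_def)
  have "f \<in> borel_measurable M"
    using f by (simp add: measurable_cong_sets[OF sets_eq_borel refl] borel_measurable_continuous_onI)
  with int show ?thesis
    using integrable_cong_AE[OF borel_measurable_integrable[OF int] _ ae_eq] by blast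
qed

end

section \<open>Nonnegative elements of L-infinity\<close>

locale nonneg_Linfty = haar M for M :: "'a::{topological_ab_group_add, t2_space} measure" +
  fixes f :: "'a \<Rightarrow> real"
  assumes Linfty: "Linfty M f" and nonneg: "locally_null M {x. f x < 0}"
begin

lemma set_integrable_finite: "A \<in> sets M \<Longrightarrow> emeasure M A < \<infinity> \<Longrightarrow> set_integrable M A f"
  by (rule Linfty_set_integrable[OF Linfty])

lemma AE_nonneg_finite: "A \<in> sets M \<Longrightarrow> emeasure M A < \<infinity> \<Longrightarrow> AE x\<in>A in M. 0 \<le> f x"
  by (rule locally_nonneg_AE[OF nonneg sigma_finite_setI_finite])

lemma set_integral_mono_finite:
  assumes "B \<in> sets M" "emeasure M B < \<infinity>" "A \<in> sets M" "A \<subseteq> B"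
  shows "(LINT x:A|M. f x) \<le> (LINT x:B|M. f x)"
  using assms by (intro set_integral_mono_set_AE set_integrable_finite AE_nonneg_finite)

lemma set_integral_nonneg_finite:
  "A \<in> sets M \<Longrightarrow> emeasure M A < \<infinity> \<Longrightarrow> 0 \<le> (LINT x:A|M. f x)"
  using set_integral_mono_finite[of A "{}"] by (simp add: set_lebesgue_integral_def)

lemma AE_eq_0_if_set_integral_eq_0:
  assumes "A \<in> sets M" "emeasure M A < \<infinity>" "(LINT x:A|M. f x) = 0"
  shows "AE x\<in>A in M. f x = 0"
proof -
  have "AE x in M. 0 \<le> indicator A x *\<^sub>R f x"
    using AE_nonneg_finite[OF assms(1,2)] by eventually_elim (simp split: split_indicator)
  moreover have "integrable M (\<lambda>x. indicator A x *\<^sub>R f x)"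
    using set_integrable_finite[OF assms(1,2)] by (simp only: set_integrable_def)
  ultimately have "AE x in M. indicator A x *\<^sub>R f x = 0"
    using assms(3) by (simp only: integral_nonneg_eq_0_iff_AE[symmetric] set_lebesgue_integral_def)
  then show ?thesis
    by eventually_elim (auto simp: indicator_def)
qed

lemma conv_indicator_nonneg: "compact K \<Longrightarrow> 0 \<le> conv M f (indicator K) x"
  unfolding conv_indicator
  by (intro set_integral_nonneg_finite compact_measurable emeasure_compact_finite compact_translated_reflection)

lemma set_integral_translate_le_conv_indicator:
  assumes "open U" "compact K" and UK: "\<And>a b c. a \<in> U \<Longrightarrow> b \<in> U \<Longrightarrow> c \<in> U \<Longrightarrow> a - b + c \<in> K"
    and "x \<in> (+) p ` U"
  shows "(LINT y:(+) p ` {u - v |u v. u \<in> U \<and> v \<in> U}|M. f y) \<le> conv M f (indicator K) x"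
proof -
  obtain w where "w \<in> U" "x = p + w"
    using \<open>x \<in> (+) p ` U\<close> by blast
  have "(+) p ` {u - v |u v. u \<in> U \<and> v \<in> U} \<subseteq> {y. x - y \<in> K}"
  proof (intro subsetI, elim imageE)
    fix y d assume "y = p + d" "d \<in> {u - v |u v. u \<in> U \<and> v \<in> U}"
    then obtain u v where "u \<in> U" "v \<in> U" "x - y = w - u + v"
      using \<open>x = p + w\<close> by (auto simp: algebra_simps)
    then show "y \<in> {y. x - y \<in> K}"
      using UK[OF \<open>w \<in> U\<close>] by simp
  qed
  moreover have "compact {y. x - y \<in> K}"
    using \<open>compact K\<close> by (rule compact_translated_reflection)
  moreover have "(+) p ` {u - v |u v. u \<in> U \<and> v \<in> U} \<in> sets M"
    using \<open>open U\<close> by (intro open_measurable open_translation_group_add open_differences_group_add)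
  ultimately show ?thesis
    unfolding conv_indicator
    by (intro set_integral_mono_finite[OF compact_measurable emeasure_compact_finite])
qed

lemma bdd_above_set_integral_compact:
  assumes "lca_group TYPE('a)"
    and conv_integrable: "\<And>K. compact K \<Longrightarrow> integrable M (conv M f (indicator K))"
  shows "bdd_above ((\<lambda>L. LINT x:L|M. f x) ` {L. compact L})"
proof -
  obtain U K :: "'a set" where U: "open U" "0 \<in> U" and "compact K"
    and UK: "\<And>a b c. a \<in> U \<Longrightarrow> b \<in> U \<Longrightarrow> c \<in> U \<Longrightarrow> a - b + c \<in> K"
    by (rule lca_group_nhds_diff_add_compact[OF assms(1)]) (rule that)
  define D where "D = {u - v |u v. u \<in> U \<and> v \<in> U}"
  have D_open: "open ((+) p ` D)" for p
    unfolding D_def using U(1) by (intro open_translation_group_add open_differences_group_add)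
  have D_finite: "emeasure M ((+) p ` D) < \<infinity>" for p
  proof -
    have "D \<subseteq> K"
      unfolding D_def using UK[of _ _ 0] U(2) by auto
    then have "emeasure M ((+) p ` D) \<le> emeasure M ((+) p ` K)"
      using compact_translation_group_add[OF \<open>compact K\<close>]
      by (intro emeasure_mono image_mono compact_measurable)
    also have "\<dots> < \<infinity>"
      using compact_translation_group_add[OF \<open>compact K\<close>] by (rule emeasure_compact_finite)
    finally show ?thesis .
  qed
  have "U \<subseteq> K"
    using UK[of _ 0 0] U(2) by auto
  then have U_finite: "emeasure M U < \<infinity>"
    using emeasure_compact_finite[OF \<open>compact K\<close>] \<open>compact K\<close>
    by (auto intro: le_less_trans emeasure_mono compact_measurable)
  then have "0 < measure M U"
    using emeasure_open_pos[OF U(1)] U(2) by (auto simp: measure_def enn2real_positive_iff)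
  obtain X where X: "disjoint_family_on (\<lambda>p. (+) p ` U) X"
    and X_cover: "\<And>y. \<exists>p\<in>X. \<exists>u\<in>U. \<exists>v\<in>U. y = p + (u - v)"
    using maximal_disjoint_translates[of U] U(2) by blast
  have "(LINT x:L|M. f x) \<le> integral\<^sup>L M (conv M f (indicator K)) / measure M U" if "compact L" for L
  proof -
    have "L \<subseteq> (\<Union>p\<in>X. (+) p ` D)"
      using X_cover unfolding D_def by fast
    then obtain J where J: "J \<subseteq> X" "finite J" "L \<subseteq> (\<Union>p\<in>J. (+) p ` D)"
      by (rule compactE_image[OF \<open>compact L\<close> D_open])
    have "(LINT x:L|M. f x) \<le> (\<Sum>p\<in>J. LINT x:(+) p ` D|M. f x)"
    proof (rule set_integral_le_sum_cover[OF J(2)])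
      show "set_integrable M ((+) p ` D) f" "AE x\<in>(+) p ` D in M. 0 \<le> f x" if "p \<in> J" for p
        using open_measurable[OF D_open] D_finite by (auto intro: set_integrable_finite AE_nonneg_finite)
      show "set_integrable M L f"
        using \<open>compact L\<close> by (intro set_integrable_finite compact_measurable emeasure_compact_finite)
    qed (rule J(3))
    also have "\<dots> \<le> integral\<^sup>L M (conv M f (indicator K)) / measure M U"
    proof -
      have "measure M U * (\<Sum>p\<in>J. LINT x:(+) p ` D|M. f x) \<le> integral\<^sup>L M (conv M f (indicator K))"
        unfolding D_def
        by (rule measure_mult_sum_le_integral[OF conv_integrable[OF \<open>compact K\<close>]
              conv_indicator_nonneg[OF \<open>compact K\<close>] U(1) U_finite X _ J(2,1)])
          (rule set_integral_translate_le_conv_indicator[OF U(1) \<open>compact K\<close> UK])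
      then show ?thesis
        using \<open>0 < measure M U\<close> by (simp add: pos_le_divide_eq mult.commute)
    qed
    finally show ?thesis .
  qed
  then show ?thesis
    by (intro bdd_aboveI2) blast
qed

lemma set_integrable_UN_incseq:
  assumes L: "\<And>n. L n \<in> sets M" "\<And>n. emeasure M (L n) < \<infinity>" "incseq L"
    and lim: "(\<lambda>n. LINT x:L n|M. f x) \<longlonglongrightarrow> l"
  shows "set_integrable M (\<Union>n. L n) f"
  unfolding set_integrable_def
proof (rule integrable_monotone_convergence[where f = "\<lambda>n x. indicator (L n) x *\<^sub>R f x" and x = l])
  have S: "sigma_finite_set M (\<Union>n. L n)"
    using L(1,2) by (rule sigma_finite_set_UN)
  show "integrable M (\<lambda>x. indicator (L n) x *\<^sub>R f x)" for n
    using set_integrable_finite[OF L(1,2)] by (simp only: set_integrable_def)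
  show "AE x in M. mono (\<lambda>n. indicator (L n) x *\<^sub>R f x)"
    using locally_nonneg_AE[OF nonneg S]
  proof eventually_elim
    case (elim x)
    show ?case
    proof (rule monoI)
      fix m n :: nat assume "m \<le> n"
      with \<open>incseq L\<close> have "L m \<subseteq> L n"
        by (rule monoD)
      then show "indicator (L m) x *\<^sub>R f x \<le> indicator (L n) x *\<^sub>R f x"
        using elim by (auto split: split_indicator)
    qed
  qed
  show "AE x in M. (\<lambda>n. indicator (L n) x *\<^sub>R f x) \<longlonglongrightarrow> indicator (\<Union>n. L n) x *\<^sub>R f x"
  proof (rule AE_I2)
    fix x
    show "(\<lambda>n. indicator (L n) x *\<^sub>R f x) \<longlonglongrightarrow> indicator (\<Union>n. L n) x *\<^sub>R f x"
    proof (cases "x \<in> (\<Union>n. L n)")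
      case True
      then obtain m where "x \<in> L m"
        by blast
      then have "\<forall>\<^sub>F n in sequentially. indicator (L n) x *\<^sub>R f x = indicator (\<Union>n. L n) x *\<^sub>R f x"
        using \<open>incseq L\<close> True unfolding eventually_sequentially
        by (intro exI[of _ m]) (auto simp: incseq_def subset_eq)
      then show ?thesis
        by (rule tendsto_eventually)
    qed simp
  qed
  show "(\<lambda>n. integral\<^sup>L M (\<lambda>x. indicator (L n) x *\<^sub>R f x)) \<longlonglongrightarrow> l"
    using lim by (simp only: set_lebesgue_integral_def)
  have "set_borel_measurable M (\<Union>n. L n) f"
    using Linfty S by (auto simp: Linfty_def intro: locally_borel_measurable_set_borel_measurable)
  then show "(\<lambda>x. indicator (\<Union>n. L n) x *\<^sub>R f x) \<in> borel_measurable M"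
    unfolding set_borel_measurable_def .
qed

lemma AE_eq_0_outside_exhaustion:
  assumes bdd: "bdd_above ((\<lambda>L. LINT x:L|M. f x) ` {L. compact L})"
    and L: "\<And>n. compact (L n)" "(\<lambda>n. LINT x:L n|M. f x) \<longlonglongrightarrow> Sup ((\<lambda>L. LINT x:L|M. f x) ` {L. compact L})"
    and K: "compact K" "K \<inter> (\<Union>n. L n) = {}"
  shows "AE x\<in>K in M. f x = 0"
proof (rule AE_eq_0_if_set_integral_eq_0)
  define s where "s = Sup ((\<lambda>L. LINT x:L|M. f x) ` {L. compact L})"
  show K_sets: "K \<in> sets M"
    using K(1) by (rule compact_measurable)
  show K_finite: "emeasure M K < \<infinity>"
    using K(1) by (rule emeasure_compact_finite)
  have "(LINT x:K|M. f x) \<le> s - (LINT x:L n|M. f x)" for n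
  proof -
    have "(LINT x:L n|M. f x) + (LINT x:K|M. f x) = (LINT x:L n \<union> K|M. f x)"
      using K L(1)
      by (intro set_integral_Un[symmetric] set_integrable_finite compact_measurable
          emeasure_compact_finite) auto
    also have "\<dots> \<le> s"
      unfolding s_def using bdd compact_Un[OF L(1) K(1)] by (intro cSup_upper) auto
    finally show ?thesis
      by simp
  qed
  moreover have "(\<lambda>n. s - (LINT x:L n|M. f x)) \<longlonglongrightarrow> 0"
    using tendsto_diff[OF tendsto_const L(2), of s] by (simp add: s_def)
  ultimately have "(LINT x:K|M. f x) \<le> 0"
    by (intro LIMSEQ_le_const[of _ 0]) auto
  then show "(LINT x:K|M. f x) = 0"
    using set_integral_nonneg_finite[OF K_sets K_finite] by simp
qed

lemma exists_sigma_compact_exhaustion: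
  assumes bdd: "bdd_above ((\<lambda>L. LINT x:L|M. f x) ` {L. compact L})"
  obtains S where "sigma_finite_set M S" "set_integrable M S f"
    "\<And>K. compact K \<Longrightarrow> K \<inter> S = {} \<Longrightarrow> AE x\<in>K in M. f x = 0"
proof -
  have mono: "(LINT x:K|M. f x) \<le> (LINT x:L|M. f x)" if "compact L" "K \<subseteq> L" "compact K" for K L
    using that by (intro set_integral_mono_finite compact_measurable emeasure_compact_finite)
  obtain L where L: "\<And>n. compact (L n)" "incseq L"
    and lim: "(\<lambda>n. LINT x:L n|M. f x) \<longlonglongrightarrow> Sup ((\<lambda>L. LINT x:L|M. f x) ` {L. compact L})"
    using exists_compact_incseq_tendsto_Sup[OF mono bdd] by blast
  have L_sets: "L n \<in> sets M" for n
    using L(1) by (rule compact_measurable)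
  have L_finite: "emeasure M (L n) < \<infinity>" for n
    using L(1) by (rule emeasure_compact_finite)
  show ?thesis
  proof (rule that)
    show "sigma_finite_set M (\<Union>n. L n)"
      using L_sets L_finite by (rule sigma_finite_set_UN)
    show "set_integrable M (\<Union>n. L n) f"
      using L_sets L_finite L(2) lim by (rule set_integrable_UN_incseq)
  qed (use AE_eq_0_outside_exhaustion[OF bdd L(1) lim] in blast)
qed

end

theorem proposition5p2:
  fixes M :: "'a::{topological_ab_group_add, t2_space} measure"
    and f :: "'a \<Rightarrow> real"
  assumes "lca_group TYPE('a)"
    and "haar_measure M"
    and "Linfty M f"
    and "locally_null M {x. f x < 0}"
    and "\<And>g. integrable M g \<Longrightarrow> (AE x in M. 0 \<le> g x) \<Longrightarrow> integrable M (conv M f g)"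
  shows "(\<exists>f'. locally_null M {x. f' x \<noteq> f x} \<and> integrable M f')
    \<and> (bounded (range f) \<and> continuous_on UNIV f \<longrightarrow> integrable M f)"
proof -
  interpret nonneg_Linfty M f
    using assms(2-4) by unfold_locales
  have "bdd_above ((\<lambda>L. LINT x:L|M. f x) ` {L. compact L})"
  proof (rule bdd_above_set_integral_compact[OF assms(1)])
    fix K :: "'a set" assume "compact K"
    then show "integrable M (conv M f (indicator K))"
      by (intro assms(5) integrable_real_indicator compact_measurable emeasure_compact_finite) auto
  qed
  then obtain S where S: "sigma_finite_set M S" "set_integrable M S f"
    and null_outside: "\<And>K. compact K \<Longrightarrow> K \<inter> S = {} \<Longrightarrow> AE x\<in>K in M. f x = 0"
    by (rule exists_sigma_compact_exhaustion) (rule that)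
  have null: "locally_null M {x. indicator S x *\<^sub>R f x \<noteq> f x}"
    using Linfty S(1) null_outside
    by (intro locally_null_outside_support) (auto simp: Linfty_def sigma_finite_set_def)
  have int: "integrable M (\<lambda>x. indicator S x *\<^sub>R f x)"
    using S(2) by (simp only: set_integrable_def)
  show ?thesis
  proof (intro conjI impI exI)
    assume "bounded (range f) \<and> continuous_on UNIV f"
    then show "integrable M f"
      using integrable_if_continuous_locally_eq[OF _ int null] by blast
  qed (fact null int)+
qed

end
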